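(* Let $A$ be a real matrix with singular values $\sigma_1\ge\sigma_2\ge\cdots\ge\sigma_n\ge0$, let $p\ge1$ and $\varepsilon>0$. Suppose $w$ is a unit vector with $A^\top w\ne 0$ such that $\|A^\top w\|_2^p\ge(1+\varepsilon)\sigma_1^p-\varepsilon\|A\|_{\mathcal{S}_p}^p$, and let $v=A^\top w/\|A^\top w\|_2$. Then \[ \left\|A\left(I-vv^\top\right)\right\|_{\mathcal{S}_p}^p\le(1+\varepsilon)\min_{\|u\|_2=1}\left\|A\left(I-uu^\top\right)\right\|_{\mathcal{S}_p}^p. \]
   Context: For a matrix $M$ with singular values $\sigma_1\ge\sigma_2\ge\cdots$, $\|M\|_{\mathcal{S}_p}=\left(\sum_i\sigma_i(M)^p\right)^{1/p}$. *)

theory Defs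
  imports "Jordan_Normal_Form.Char_Poly"
begin

definition vnorm2 :: "real vec \<Rightarrow> real" where
  "vnorm2 x = sqrt (x \<bullet> x)"

definition outer :: "real vec \<Rightarrow> real mat" where
  "outer u = mat (dim_vec u) (dim_vec u) (\<lambda>(i,j). u $ i * u $ j)"

text \<open>Singular values of M (with multiplicity): square roots of the eigenvalues
  of M^T M, i.e. of the roots of its characteristic polynomial counted with
  multiplicity (M^T M is symmetric positive semidefinite, so all roots are real
  and nonnegative and there are exactly dim_col M of them).\<close>
definition singular_values :: "real mat \<Rightarrow> real multiset" where
  "singular_values M = image_mset sqrt (proots (char_poly (transpose_mat M * M)))"

definition sigma_max :: "real mat \<Rightarrow> real" where
  "sigma_max M = Max (set_mset (singular_values M))"

definition schatten_norm :: "real \<Rightarrow> real mat \<Rightarrow> real" where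
  "schatten_norm p M = (\<Sum>\<^sub># (image_mset (\<lambda>s. s powr p) (singular_values M))) powr (1 / p)"

end

(*
  Write S = ||A||_p^p = sum_j sigma_j^p and a = ||A^T w||^p; the hypothesis says
  S - a <= (1 + eps) (S - sigma_1^p), so two estimates suffice.

  Lower bound: for every u, the singular values of A (I - u u^T) interlace those of A,
  sigma_(j+1)(A) <= sigma_j(A (I - u u^T)), by Courant-Fischer (a test vector orthogonal to u
  does not see the projection). Hence ||A (I - u u^T)||_p^p >= S - sigma_1^p.

  Upper bound: B = A (I - v v^T) satisfies B v = 0 and w^T B = 0, so v and w can be adjoined to
  the right and left singular vectors of B. The Ky Fan type inequality
  sum_i |u_i^T A v_i|^p <= ||A||_p^p for orthonormal systems (u_i), (v_i) then gives
  a + ||B||_p^p <= S.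
*)
theory Submission
  imports Defs "HOL-Computational_Algebra.Fundamental_Theorem_Algebra"
begin

definition orthonormal :: "nat set \<Rightarrow> nat \<Rightarrow> (nat \<Rightarrow> real vec) \<Rightarrow> bool" where
  "orthonormal I d e \<longleftrightarrow> (\<forall>i\<in>I. e i \<in> carrier_vec d) \<and>
     (\<forall>i\<in>I. \<forall>j\<in>I. e i \<bullet> e j = (if i = j then 1 else 0))"

lemma orthonormalD:
  assumes "orthonormal I d e" and "i \<in> I"
  shows "e i \<in> carrier_vec d" "e i \<bullet> e i = 1"
    "\<And>j. j \<in> I \<Longrightarrow> e i \<bullet> e j = (if i = j then 1 else 0)"
  using assms unfolding orthonormal_def by auto

lemma orthonormal_coordinates:
  assumes "orthonormal I d e" and "i \<in> I" and "j \<in> I"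
  shows "(\<Sum>l<d. e i $ l * e j $ l) = (if i = j then 1 else 0)"
  using orthonormalD(1)[OF assms(1,3)] orthonormalD(3)[OF assms]
  by (simp add: scalar_prod_def atLeast0LessThan)

lemma nonzero_vec_index:
  assumes "v \<in> carrier_vec n" and "v \<noteq> 0\<^sub>v n"
  obtains i where "i < n" and "v $ i \<noteq> 0"
  using assms by (auto simp: vec_eq_iff)

lemma scalar_prod_self_pos:
  fixes x :: "real vec"
  assumes "x \<in> carrier_vec n" and "x \<noteq> 0\<^sub>v n"
  shows "x \<bullet> x > 0"
  using conjugate_square_greater_0_vec[OF assms(1)] assms(2) by simp

lemma bessel_inequality_sums:
  fixes e :: "nat \<Rightarrow> nat \<Rightarrow> real" and x :: "nat \<Rightarrow> real"
  assumes fin: "finite I"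
    and on: "\<And>i j. i \<in> I \<Longrightarrow> j \<in> I \<Longrightarrow> (\<Sum>l<d. e i l * e j l) = (if i = j then 1 else 0)"
  shows "(\<Sum>i\<in>I. (\<Sum>l<d. e i l * x l)\<^sup>2) \<le> (\<Sum>l<d. (x l)\<^sup>2)"
proof -
  define c where "c i = (\<Sum>l<d. e i l * x l)" for i
  define S where "S l = (\<Sum>i\<in>I. c i * e i l)" for l
  have cross: "(\<Sum>l<d. x l * S l) = (\<Sum>i\<in>I. (c i)\<^sup>2)"
  proof -
    have "(\<Sum>l<d. x l * S l) = (\<Sum>l<d. \<Sum>i\<in>I. c i * (e i l * x l))"
      unfolding S_def by (simp add: sum_distrib_left mult_ac)
    also have "\<dots> = (\<Sum>i\<in>I. \<Sum>l<d. c i * (e i l * x l))" by (rule sum.swap)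
    also have "\<dots> = (\<Sum>i\<in>I. (c i)\<^sup>2)"
      by (simp add: sum_distrib_left[symmetric] c_def power2_eq_square)
    finally show ?thesis .
  qed
  have square: "(\<Sum>l<d. (S l)\<^sup>2) = (\<Sum>i\<in>I. (c i)\<^sup>2)"
  proof -
    have "(\<Sum>l<d. (S l)\<^sup>2) = (\<Sum>l<d. \<Sum>i\<in>I. \<Sum>j\<in>I. c i * c j * (e i l * e j l))"
      unfolding S_def power2_eq_square sum_product by (simp add: mult_ac)
    also have "\<dots> = (\<Sum>i\<in>I. \<Sum>j\<in>I. \<Sum>l<d. c i * c j * (e i l * e j l))"
      by (simp add: sum.swap[of _ "{..<d}"] sum.swap[of _ "{..<d}" I])
    also have "\<dots> = (\<Sum>i\<in>I. \<Sum>j\<in>I. c i * c j * (if i = j then 1 else 0))"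
      by (simp add: sum_distrib_left[symmetric] on)
    also have "\<dots> = (\<Sum>i\<in>I. (c i)\<^sup>2)"
      using fin by (simp add: power2_eq_square if_distrib sum.delta cong: if_cong)
    finally show ?thesis .
  qed
  have "0 \<le> (\<Sum>l<d. (x l - S l)\<^sup>2)" by (simp add: sum_nonneg)
  also have "\<dots> = (\<Sum>l<d. (x l)\<^sup>2) - 2 * (\<Sum>l<d. x l * S l) + (\<Sum>l<d. (S l)\<^sup>2)"
    by (simp add: power2_diff sum.distrib sum_subtractf sum_distrib_left mult_ac)
  finally show ?thesis using cross square by (simp add: c_def)
qed

lemma bessel_inequality:
  assumes "finite I" and on: "orthonormal I d e" and x: "x \<in> carrier_vec d"
  shows "(\<Sum>i\<in>I. (e i \<bullet> x)\<^sup>2) \<le> x \<bullet> x"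
proof -
  have "(\<Sum>i\<in>I. (\<Sum>l<d. e i $ l * x $ l)\<^sup>2) \<le> (\<Sum>l<d. (x $ l)\<^sup>2)"
    by (rule bessel_inequality_sums[OF assms(1) orthonormal_coordinates[OF on]])
  with x show ?thesis by (simp add: scalar_prod_def atLeast0LessThan power2_eq_square)
qed

lemma orthonormal_basis_complete:
  assumes on: "orthonormal {..<n} n ys" and "l < n" and "k < n"
  shows "(\<Sum>j<n. ys j $ l * ys j $ k) = (if l = k then 1 else 0)"
proof -
  define Y where "Y = mat n n (\<lambda>(l,j). ys j $ l)"
  have Y: "Y \<in> carrier_mat n n" unfolding Y_def by simp
  have "transpose_mat Y * Y = 1\<^sub>m n"
  proof (rule eq_matI)
    fix i j assume "i < dim_row (1\<^sub>m n :: real mat)" and "j < dim_col (1\<^sub>m n :: real mat)"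
    with orthonormal_coordinates[OF on, of i j]
    show "(transpose_mat Y * Y) $$ (i,j) = (1\<^sub>m n :: real mat) $$ (i,j)"
      unfolding Y_def by (simp add: scalar_prod_def atLeast0LessThan)
  qed (use Y in auto)
  with Y have "Y * transpose_mat Y = 1\<^sub>m n"
    using mat_mult_left_right_inverse[of "transpose_mat Y" n Y] by auto
  hence "(Y * transpose_mat Y) $$ (l,k) = (1\<^sub>m n :: real mat) $$ (l,k)" by simp
  with assms(2,3) show ?thesis unfolding Y_def by (simp add: scalar_prod_def atLeast0LessThan)
qed

lemma orthonormal_basis_expansion:
  assumes on: "orthonormal {..<n} n ys" and x: "x \<in> carrier_vec n" and l: "l < n"
  shows "(\<Sum>j<n. (ys j \<bullet> x) * ys j $ l) = x $ l"
proof -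
  have "(\<Sum>j<n. (ys j \<bullet> x) * ys j $ l) = (\<Sum>j<n. \<Sum>k<n. ys j $ k * x $ k * ys j $ l)"
    using x on by (simp add: orthonormal_def scalar_prod_def atLeast0LessThan sum_distrib_right)
  also have "\<dots> = (\<Sum>k<n. x $ k * (\<Sum>j<n. ys j $ l * ys j $ k))"
    by (subst sum.swap) (simp add: sum_distrib_left mult_ac)
  also have "\<dots> = x $ l"
    using l by (simp add: orthonormal_basis_complete[OF on l] if_distrib cong: if_cong)
  finally show ?thesis .
qed

lemma parseval_identity:
  assumes on: "orthonormal {..<n} n ys" and a: "a \<in> carrier_vec n" and b: "b \<in> carrier_vec n"
  shows "a \<bullet> b = (\<Sum>j<n. (ys j \<bullet> a) * (ys j \<bullet> b))"
proof -
  have "a \<bullet> b = (\<Sum>l<n. a $ l * (\<Sum>j<n. (ys j \<bullet> b) * ys j $ l))"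
    unfolding scalar_prod_def[of a b] using b
    by (auto simp: atLeast0LessThan orthonormal_basis_expansion[OF on b] intro!: sum.cong)
  also have "\<dots> = (\<Sum>l<n. \<Sum>j<n. (ys j \<bullet> b) * (ys j $ l * a $ l))"
    by (simp add: sum_distrib_left mult_ac)
  also have "\<dots> = (\<Sum>j<n. (ys j \<bullet> b) * (\<Sum>l<n. ys j $ l * a $ l))"
    by (subst sum.swap) (simp add: sum_distrib_left)
  also have "\<dots> = (\<Sum>j<n. (ys j \<bullet> a) * (ys j \<bullet> b))"
    using a on by (simp add: orthonormal_def scalar_prod_def atLeast0LessThan mult.commute)
  finally show ?thesis .
qed

lemma scalar_prod_gram:
  fixes M :: "real mat"
  assumes M: "M \<in> carrier_mat m n" and a: "a \<in> carrier_vec n" and b: "b \<in> carrier_vec n"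
  shows "a \<bullet> ((transpose_mat M * M) *\<^sub>v b) = (M *\<^sub>v a) \<bullet> (M *\<^sub>v b)"
proof -
  have "a \<bullet> ((transpose_mat M * M) *\<^sub>v b) = (transpose_mat M *\<^sub>v (M *\<^sub>v b)) \<bullet> a"
    using assms by (simp add: assoc_mult_mat_vec[of _ n m] comm_scalar_prod[of a n])
  also have "\<dots> = (M *\<^sub>v a) \<bullet> (M *\<^sub>v b)"
    using transpose_vec_mult_scalar[OF M a, of "M *\<^sub>v b"] assms
    by (simp add: comm_scalar_prod[of _ m])
  finally show ?thesis .
qed

lemma orthogonal_scalar_prod:
  fixes Q :: "real mat"
  assumes "Q \<in> carrier_mat m n" and "transpose_mat Q * Q = 1\<^sub>m n"
    and "a \<in> carrier_vec n" and "b \<in> carrier_vec n"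
  shows "(Q *\<^sub>v a) \<bullet> (Q *\<^sub>v b) = a \<bullet> b"
  using scalar_prod_gram[OF assms(1,3,4)] assms(2,4) by simp

section \<open>The spectral theorem for real symmetric matrices\<close>

lemma complex_eigenvector_exists:
  fixes C :: "real mat"
  assumes C: "C \<in> carrier_mat n n" and n: "n > 0"
  shows "\<exists>z v. v \<in> carrier_vec n \<and> v \<noteq> 0\<^sub>v n \<and> map_mat complex_of_real C *\<^sub>v v = z \<cdot>\<^sub>v v"
proof -
  let ?Cc = "map_mat complex_of_real C"
  have Cc: "?Cc \<in> carrier_mat n n" using C by simp
  have "degree (char_poly ?Cc) = n" using degree_monic_char_poly[OF Cc] by simp
  hence "\<not> constant (poly (char_poly ?Cc))" using n by (simp add: constant_degree)
  then obtain z where "poly (char_poly ?Cc) z = 0" using fundamental_theorem_of_algebra by blast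
  hence "eigenvalue ?Cc z" using eigenvalue_root_char_poly[OF Cc] by simp
  then obtain v where "eigenvector ?Cc v z" unfolding eigenvalue_def by blast
  thus ?thesis unfolding eigenvector_def using Cc by auto
qed

lemma symmetric_complex_eigenvalue_real:
  fixes G :: "real mat"
  assumes G: "G \<in> carrier_mat n n" and sym: "transpose_mat G = G"
    and v: "v \<in> carrier_vec n" "v \<noteq> 0\<^sub>v n"
    and ev: "map_mat complex_of_real G *\<^sub>v v = z \<cdot>\<^sub>v v"
  shows "Im z = 0"
proof -
  have evi: "(\<Sum>j<n. complex_of_real (G $$ (i,j)) * v $ j) = z * v $ i" if "i < n" for i
    using arg_cong[OF ev, of "\<lambda>x. x $ i"] that G v by (simp add: scalar_prod_def atLeast0LessThan)
  have symG: "G $$ (j,i) = G $$ (i,j)" if "i < n" "j < n" for i j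
    using arg_cong[OF sym, of "\<lambda>M. M $$ (i,j)"] that G by simp
  \<comment> \<open>The Hermitian form \<open>v\<^sup>* G v\<close> equals \<open>z |v|\<^sup>2\<close> and is real.\<close>
  define s where "s = (\<Sum>i<n. \<Sum>j<n. cnj (v $ i) * complex_of_real (G $$ (i,j)) * v $ j)"
  define N where "N = (\<Sum>i<n. (cmod (v $ i))\<^sup>2)"
  have "s = (\<Sum>i<n. cnj (v $ i) * (z * v $ i))"
    unfolding s_def
    by (intro sum.cong refl) (simp add: mult.assoc sum_distrib_left[symmetric] evi)
  also have "\<dots> = z * complex_of_real N"
    unfolding N_def of_real_sum sum_distrib_left
    by (intro sum.cong refl) (simp only: complex_norm_square mult_ac)
  finally have s_eq: "s = z * complex_of_real N" .
  have "cnj s = (\<Sum>i<n. \<Sum>j<n. v $ i * complex_of_real (G $$ (i,j)) * cnj (v $ j))"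
    unfolding s_def by simp
  also have "\<dots> = (\<Sum>j<n. \<Sum>i<n. v $ i * complex_of_real (G $$ (i,j)) * cnj (v $ j))"
    by (rule sum.swap)
  also have "\<dots> = s" unfolding s_def
    by (intro sum.cong refl) (simp add: symG mult_ac)
  finally have "Im (cnj s) = Im s" by simp
  hence "Im s = 0" by simp
  obtain i0 where i0: "i0 < n" "v $ i0 \<noteq> 0" by (rule nonzero_vec_index[OF v])
  have "N > 0" unfolding N_def by (rule sum_pos2[of _ i0]) (use i0 in auto)
  with \<open>Im s = 0\<close> s_eq show ?thesis by simp
qed

lemma symmetric_real_eigenvector:
  fixes G :: "real mat"
  assumes G: "G \<in> carrier_mat n n" and sym: "transpose_mat G = G" and n: "n > 0"
  shows "\<exists>\<mu> y. y \<in> carrier_vec n \<and> y \<bullet> y = 1 \<and> G *\<^sub>v y = \<mu> \<cdot>\<^sub>v y"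
proof -
  obtain z v where v: "v \<in> carrier_vec n" "v \<noteq> 0\<^sub>v n"
    and ev: "map_mat complex_of_real G *\<^sub>v v = z \<cdot>\<^sub>v v"
    using complex_eigenvector_exists[OF G n] by blast
  have z: "z = complex_of_real (Re z)"
    using symmetric_complex_eigenvalue_real[OF G sym v ev] by (simp add: complex_eq_iff)
  \<comment> \<open>Real and imaginary part of \<open>v\<close> are real eigenvectors for the eigenvalue \<open>Re z\<close>.\<close>
  have part: "G *\<^sub>v vec n (\<lambda>i. f (v $ i)) = Re z \<cdot>\<^sub>v vec n (\<lambda>i. f (v $ i))"
    if f: "f = Re \<or> f = Im" for f
  proof (rule eq_vecI)
    fix i assume "i < dim_vec (Re z \<cdot>\<^sub>v vec n (\<lambda>i. f (v $ i)))"
    hence i: "i < n" by simp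
    have "(\<Sum>j<n. complex_of_real (G $$ (i,j)) * v $ j) = complex_of_real (Re z) * v $ i"
      using arg_cong[OF ev, of "\<lambda>x. x $ i"] i G v z
      by (simp add: scalar_prod_def atLeast0LessThan)
    from arg_cong[OF this, of f] f
    have "(\<Sum>j<n. G $$ (i,j) * f (v $ j)) = Re z * f (v $ i)"
      by (auto simp: Re_sum Im_sum)
    with i G show "(G *\<^sub>v vec n (\<lambda>i. f (v $ i))) $ i = (Re z \<cdot>\<^sub>v vec n (\<lambda>i. f (v $ i))) $ i"
      by (simp add: scalar_prod_def atLeast0LessThan)
  qed (use G in simp)
  obtain i0 where i0: "i0 < n" "v $ i0 \<noteq> 0" by (rule nonzero_vec_index[OF v])
  have "Re (v $ i0) \<noteq> 0 \<or> Im (v $ i0) \<noteq> 0" using i0(2) complex_eq_iff by auto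
  then obtain f where f: "f = Re \<or> f = Im" and "f (v $ i0) \<noteq> 0" by blast
  define x where "x = vec n (\<lambda>i. f (v $ i))"
  have x: "x \<in> carrier_vec n" "x \<noteq> 0\<^sub>v n"
    using \<open>f (v $ i0) \<noteq> 0\<close> i0(1) unfolding x_def by (auto simp: vec_eq_iff)
  have xx: "x \<bullet> x > 0" by (rule scalar_prod_self_pos[OF x])
  define y where "y = (1 / sqrt (x \<bullet> x)) \<cdot>\<^sub>v x"
  have "y \<in> carrier_vec n" "y \<bullet> y = 1" using x xx unfolding y_def
    by (simp_all add: power2_eq_square[symmetric])
  moreover have "G *\<^sub>v y = Re z \<cdot>\<^sub>v y" unfolding y_def
    using mult_mat_vec[OF G x(1)] part[OF f] by (simp add: x_def smult_smult_assoc mult.commute)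
  ultimately show ?thesis by blast
qed

definition householder :: "nat \<Rightarrow> real vec \<Rightarrow> real mat" where
  "householder N h = mat N N (\<lambda>(i,j). (if i = j then 1 else 0) - 2 * h $ i * h $ j / (\<Sum>k<N. (h $ k)\<^sup>2))"

lemma householder_symmetric: "transpose_mat (householder N h) = householder N h"
  unfolding householder_def by (auto simp: mult_ac)

lemma householder_involutive:
  assumes hh: "(\<Sum>k<N. (h $ k)\<^sup>2) \<noteq> 0"
  shows "householder N h * householder N h = 1\<^sub>m N"
proof (rule eq_matI)
  define hh where "hh = (\<Sum>k<N. (h $ k)\<^sup>2)"
  fix i j assume "i < dim_row (1\<^sub>m N :: real mat)" and "j < dim_col (1\<^sub>m N :: real mat)"
  hence i: "i < N" and j: "j < N" by auto
  have "(householder N h * householder N h) $$ (i,j) = (\<Sum>k<N. ((if i = k then 1 else 0) - 2 * h $ i * h $ k / hh) *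
                                 ((if k = j then 1 else 0) - 2 * h $ k * h $ j / hh))"
    using i j unfolding householder_def hh_def by (simp add: scalar_prod_def atLeast0LessThan)
  also have "\<dots> = (\<Sum>k<N. (if k = i then (if k = j then 1 else 0) else 0)
        - (if k = i then 2 * h $ k * h $ j / hh else 0)
        - (if k = j then 2 * h $ i * h $ k / hh else 0)
        + (4 * h $ i * h $ j / (hh * hh)) * (h $ k)\<^sup>2)"
    by (intro sum.cong refl) (auto simp: algebra_simps power2_eq_square)
  also have "\<dots> = (\<Sum>k<N. (if k = i then (if k = j then 1 else 0) else 0))
        - (\<Sum>k<N. if k = i then 2 * h $ k * h $ j / hh else 0)
        - (\<Sum>k<N. if k = j then 2 * h $ i * h $ k / hh else 0)
        + (4 * h $ i * h $ j / (hh * hh)) * (\<Sum>k<N. (h $ k)\<^sup>2)"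
    by (simp add: sum.distrib sum_subtractf sum_distrib_left)
  also have "\<dots> = (if i = j then 1 else 0) - 2 * h $ i * h $ j / hh - 2 * h $ i * h $ j / hh
        + (4 * h $ i * h $ j / (hh * hh)) * hh"
    using i j unfolding hh_def[symmetric] by simp
  also have "\<dots> = (if i = j then 1 else 0)" using hh unfolding hh_def by (simp add: field_simps)
  finally show "(householder N h * householder N h) $$ (i,j) = (1\<^sub>m N :: real mat) $$ (i,j)"
    using i j by simp
qed (auto simp: householder_def)

lemma orthogonal_matrix_first_column:
  fixes y :: "real vec"
  assumes y: "y \<in> carrier_vec N" and yy: "y \<bullet> y = 1" and N: "0 < N"
  shows "\<exists>Q \<in> carrier_mat N N. transpose_mat Q * Q = 1\<^sub>m N \<and> col Q 0 = y"
proof -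
  define h where "h = vec N (\<lambda>i. y $ i - (if i = 0 then 1 else 0))"
  have "(\<Sum>k<N. (h $ k)\<^sup>2)
      = (\<Sum>k<N. (y $ k)\<^sup>2 - 2 * (if k = 0 then y $ k else 0) + (if k = 0 then 1 else 0))"
    unfolding h_def by (intro sum.cong refl) (auto simp: power2_eq_square algebra_simps)
  also have "\<dots> = (\<Sum>k<N. (y $ k)\<^sup>2) - 2 * y $ 0 + 1"
    using N by (simp add: sum.distrib sum_subtractf sum_distrib_left[symmetric])
  finally have hh: "(\<Sum>k<N. (h $ k)\<^sup>2) = - 2 * h $ 0"
    using yy y N by (simp add: h_def scalar_prod_def atLeast0LessThan power2_eq_square)
  show ?thesis
  proof (cases "h $ 0 = 0")
    case True
    with hh have "(\<Sum>k<N. (h $ k)\<^sup>2) = 0" by simp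
    hence "h $ k = 0" if "k < N" for k
      using that by (subst (asm) sum_nonneg_eq_0_iff) auto
    hence "col (1\<^sub>m N) 0 = y" using y N unfolding h_def by (auto intro!: eq_vecI)
    thus ?thesis by (intro bexI[of _ "1\<^sub>m N"]) auto
  next
    case False
    \<comment> \<open>The reflection in the hyperplane orthogonal to \<open>y - e\<^sub>0\<close> swaps \<open>e\<^sub>0\<close> and \<open>y\<close>.\<close>
    define Q where "Q = householder N h"
    have "col Q 0 = y"
    proof (rule eq_vecI)
      fix i assume "i < dim_vec y"
      hence i: "i < N" using y by simp
      have "2 * h $ i * h $ 0 / (- 2 * h $ 0) = - h $ i" using False by (simp add: field_simps)
      hence "col Q 0 $ i = (if i = 0 then 1 else 0) + h $ i"
        using i N unfolding Q_def householder_def hh by simp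
      thus "col Q 0 $ i = y $ i" using i unfolding h_def by simp
    qed (use y in \<open>simp add: Q_def householder_def\<close>)
    moreover have "transpose_mat Q * Q = 1\<^sub>m N"
      unfolding Q_def householder_symmetric using False hh by (intro householder_involutive) simp
    ultimately show ?thesis unfolding Q_def by (intro bexI[of _ "householder N h"]) (auto simp: householder_def)
  qed
qed

definition orthonormal_eigenbasis :: "real mat \<Rightarrow> nat \<Rightarrow> (nat \<Rightarrow> real vec) \<Rightarrow> (nat \<Rightarrow> real) \<Rightarrow> bool" where
  "orthonormal_eigenbasis G n ys lams \<longleftrightarrow>
     orthonormal {..<n} n ys \<and> (\<forall>j<n. G *\<^sub>v ys j = lams j \<cdot>\<^sub>v ys j)"

lemma orthonormal_eigenbasisD:
  assumes "orthonormal_eigenbasis G n ys lams"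
  shows "orthonormal {..<n} n ys" "\<And>j. j < n \<Longrightarrow> ys j \<in> carrier_vec n"
    "\<And>j. j < n \<Longrightarrow> G *\<^sub>v ys j = lams j \<cdot>\<^sub>v ys j"
  using assms unfolding orthonormal_eigenbasis_def orthonormal_def by auto

lemma eigenbasis_orthogonal_similar:
  fixes G Q :: "real mat"
  assumes G: "G \<in> carrier_mat n n" and Q: "Q \<in> carrier_mat n n"
    and QQ: "transpose_mat Q * Q = 1\<^sub>m n"
    and es: "orthonormal_eigenbasis (transpose_mat Q * G * Q) n zs lams"
  shows "orthonormal_eigenbasis G n (\<lambda>k. Q *\<^sub>v zs k) lams"
  unfolding orthonormal_eigenbasis_def orthonormal_def
proof (intro conjI ballI allI impI)
  fix i j assume "i \<in> {..<n}" "j \<in> {..<n}"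
  with es show "(Q *\<^sub>v zs i) \<bullet> (Q *\<^sub>v zs j) = (if i = j then 1 else 0)"
    using orthogonal_scalar_prod[OF Q QQ] orthonormalD[OF orthonormal_eigenbasisD(1)[OF es]]
    by (simp add: orthonormal_eigenbasisD(2))
next
  fix j assume j: "j < n"
  have z: "zs j \<in> carrier_vec n" using orthonormal_eigenbasisD(2)[OF es j] .
  have QQ': "Q * transpose_mat Q = 1\<^sub>m n"
    using mat_mult_left_right_inverse[OF _ Q QQ] Q by simp
  have "G *\<^sub>v (Q *\<^sub>v zs j) = (Q * transpose_mat Q) *\<^sub>v (G *\<^sub>v (Q *\<^sub>v zs j))"
    unfolding QQ' using G Q z by simp
  also have "\<dots> = Q *\<^sub>v ((transpose_mat Q * G * Q) *\<^sub>v zs j)"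
    using G Q z assoc_mult_mat_vec[of "transpose_mat Q" n n "G * Q" n "zs j"]
    by (simp add: assoc_mult_mat_vec[of _ n n])
  also have "\<dots> = lams j \<cdot>\<^sub>v (Q *\<^sub>v zs j)"
    unfolding orthonormal_eigenbasisD(3)[OF es j] using Q z by (simp add: mult_mat_vec)
  finally show "G *\<^sub>v (Q *\<^sub>v zs j) = lams j \<cdot>\<^sub>v (Q *\<^sub>v zs j)" .
next
  fix i assume "i \<in> {..<n}"
  thus "Q *\<^sub>v zs i \<in> carrier_vec n" using Q orthonormal_eigenbasisD(2)[OF es] by simp
qed

lemma eigenbasis_block_extend:
  fixes G :: "real mat"
  assumes G: "G \<in> carrier_mat (Suc n) (Suc n)"
    and col0: "\<And>i. i < Suc n \<Longrightarrow> G $$ (i,0) = (if i = 0 then \<mu> else 0)"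
    and row0: "\<And>j. j < Suc n \<Longrightarrow> G $$ (0,j) = (if j = 0 then \<mu> else 0)"
    and es: "orthonormal_eigenbasis (mat n n (\<lambda>(i,j). G $$ (Suc i, Suc j))) n ys lams"
  shows "\<exists>zs mus. orthonormal_eigenbasis G (Suc n) zs mus"
proof -
  let ?G' = "mat n n (\<lambda>(i,j). G $$ (Suc i, Suc j))"
  have mult: "G *\<^sub>v vCons a w = vCons (\<mu> * a) (?G' *\<^sub>v w)" if w: "w \<in> carrier_vec n" for a w
  proof (rule eq_vecI)
    fix i assume "i < dim_vec (vCons (\<mu> * a) (?G' *\<^sub>v w))"
    hence i: "i < Suc n" by simp
    have "row G i = vCons (G $$ (i,0)) (vec n (\<lambda>l. G $$ (i, Suc l)))"
      using G i by (intro eq_vecI) (auto simp: vec_index_vCons)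
    hence "(G *\<^sub>v vCons a w) $ i = G $$ (i,0) * a + vec n (\<lambda>l. G $$ (i, Suc l)) \<bullet> w"
      using G i by simp
    also have "\<dots> = vCons (\<mu> * a) (?G' *\<^sub>v w) $ i"
      using i w row0 by (cases i) (auto simp: col0 scalar_prod_def)
    finally show "(G *\<^sub>v vCons a w) $ i = vCons (\<mu> * a) (?G' *\<^sub>v w) $ i" .
  qed (use G in simp)
  have smult: "c \<cdot>\<^sub>v vCons a w = vCons (c * a) (c \<cdot>\<^sub>v w)" for c a and w :: "real vec"
    by (intro eq_vecI) (auto simp: vec_index_vCons)
  have zero: "?G' *\<^sub>v 0\<^sub>v n = 0\<^sub>v n" by (intro eq_vecI) auto
  define zs where "zs k = (case k of 0 \<Rightarrow> vCons 1 (0\<^sub>v n) | Suc k \<Rightarrow> vCons 0 (ys k))" for k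
  define mus where "mus k = (case k of 0 \<Rightarrow> \<mu> | Suc k \<Rightarrow> lams k)" for k
  have ys: "\<And>k. k < n \<Longrightarrow> ys k \<in> carrier_vec n"
    and on: "orthonormal {..<n} n ys" and ev: "\<And>k. k < n \<Longrightarrow> ?G' *\<^sub>v ys k = lams k \<cdot>\<^sub>v ys k"
    using orthonormal_eigenbasisD[OF es] by auto
  have "orthonormal_eigenbasis G (Suc n) zs mus"
    unfolding orthonormal_eigenbasis_def orthonormal_def
  proof (intro conjI ballI allI impI)
    fix k assume "k \<in> {..<Suc n}"
    thus "zs k \<in> carrier_vec (Suc n)" using ys by (cases k) (auto simp: zs_def)
  next
    fix k l assume "k \<in> {..<Suc n}" "l \<in> {..<Suc n}"
    thus "zs k \<bullet> zs l = (if k = l then 1 else 0)"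
      using ys orthonormalD(3)[OF on] by (cases k; cases l) (auto simp: zs_def)
  next
    fix k assume "k < Suc n"
    thus "G *\<^sub>v zs k = mus k \<cdot>\<^sub>v zs k"
      using ys ev by (cases k) (auto simp: zs_def mus_def mult smult zero)
  qed
  thus ?thesis by blast
qed

lemma orthogonal_similar_symmetric:
  fixes G Q :: "real mat"
  assumes G: "G \<in> carrier_mat n n" and GT: "transpose_mat G = G" and Q: "Q \<in> carrier_mat n n"
  shows "transpose_mat (transpose_mat Q * G * Q) = transpose_mat Q * G * Q"
proof -
  have "transpose_mat (transpose_mat Q * G * Q) = transpose_mat Q * transpose_mat (transpose_mat Q * G)"
    by (rule transpose_mult) (use Q G in auto)
  also have "transpose_mat (transpose_mat Q * G) = G * Q"
    using transpose_mult[of "transpose_mat Q" n n G] GT Q G by simp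
  finally show ?thesis using Q G by (simp add: assoc_mult_mat[of _ n n])
qed

lemma orthogonal_similar_first_column:
  fixes G Q :: "real mat"
  assumes G: "G \<in> carrier_mat n n" and Q: "Q \<in> carrier_mat n n"
    and QQ: "transpose_mat Q * Q = 1\<^sub>m n" and Qy: "col Q 0 = y" and y: "y \<in> carrier_vec n"
    and Gy: "G *\<^sub>v y = \<mu> \<cdot>\<^sub>v y" and i: "i < n"
  shows "(transpose_mat Q * G * Q) $$ (i,0) = (if i = 0 then \<mu> else 0)"
proof -
  have "(transpose_mat Q * G * Q) $$ (i,0) = row (transpose_mat Q * G) i \<bullet> y"
    unfolding Qy[symmetric] by (rule index_mult_mat(1)) (use i Q G in auto)
  also have "\<dots> = ((transpose_mat Q * G) *\<^sub>v y) $ i"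
    by (rule index_mult_mat_vec[symmetric]) (use i Q G in simp)
  also have "\<dots> = \<mu> * (transpose_mat Q * Q) $$ (i,0)"
    using i Q G y Gy Qy by (simp add: assoc_mult_mat_vec[of _ n n] mult_mat_vec)
  finally show ?thesis using QQ i by simp
qed

theorem spectral_theorem:
  fixes G :: "real mat"
  assumes "G \<in> carrier_mat n n" and "transpose_mat G = G"
  shows "\<exists>ys lams. orthonormal_eigenbasis G n ys lams"
  using assms
proof (induction n arbitrary: G)
  case 0
  show ?case by (auto simp: orthonormal_eigenbasis_def orthonormal_def)
next
  case (Suc n)
  note G = Suc.prems(1) and GT = Suc.prems(2)
  obtain \<mu> y where y: "y \<in> carrier_vec (Suc n)" "y \<bullet> y = 1" and Gy: "G *\<^sub>v y = \<mu> \<cdot>\<^sub>v y"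
    using symmetric_real_eigenvector[OF G GT] by blast
  obtain Q where Q: "Q \<in> carrier_mat (Suc n) (Suc n)"
    and QQ: "transpose_mat Q * Q = 1\<^sub>m (Suc n)" and Qy: "col Q 0 = y"
    using orthogonal_matrix_first_column[OF y] by blast
  define G1 where "G1 = transpose_mat Q * G * Q"
  have G1: "G1 \<in> carrier_mat (Suc n) (Suc n)" unfolding G1_def using Q G by simp
  have G1T: "transpose_mat G1 = G1"
    unfolding G1_def by (rule orthogonal_similar_symmetric[OF G GT Q])
  have col0: "G1 $$ (i,0) = (if i = 0 then \<mu> else 0)" if "i < Suc n" for i
    unfolding G1_def by (rule orthogonal_similar_first_column[OF G Q QQ Qy y(1) Gy that])
  have row0: "G1 $$ (0,j) = (if j = 0 then \<mu> else 0)" if "j < Suc n" for j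
    using col0[OF that] arg_cong[OF G1T, of "\<lambda>M. M $$ (j,0)"] that G1 by simp
  let ?G' = "mat n n (\<lambda>(i,j). G1 $$ (Suc i, Suc j))"
  have "G1 $$ (Suc j, Suc i) = G1 $$ (Suc i, Suc j)" if "i < n" "j < n" for i j
    using arg_cong[OF G1T, of "\<lambda>M. M $$ (Suc i, Suc j)"] that G1 by simp
  hence "transpose_mat ?G' = ?G'" by (auto simp: mat_eq_iff)
  then obtain ys lams where "orthonormal_eigenbasis ?G' n ys lams"
    using Suc.IH[of ?G'] by auto
  then obtain zs mus where "orthonormal_eigenbasis G1 (Suc n) zs mus"
    using eigenbasis_block_extend[OF G1 col0 row0] by blast
  thus ?case using eigenbasis_orthogonal_similar[OF G Q QQ] unfolding G1_def by blast
qed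

corollary spectral_theorem_sorted:
  fixes G :: "real mat"
  assumes "G \<in> carrier_mat n n" and "transpose_mat G = G"
  shows "\<exists>ys lams. orthonormal_eigenbasis G n ys lams \<and> (\<forall>i j. i \<le> j \<longrightarrow> j < n \<longrightarrow> lams j \<le> lams i)"
proof -
  obtain ys lams where es: "orthonormal_eigenbasis G n ys lams"
    using spectral_theorem[OF assms] by blast
  define idx where "idx = sort_key (\<lambda>i. - lams i) [0..<n]"
  have ms: "mset idx = mset [0..<n]" unfolding idx_def by simp
  have len: "length idx = n" using arg_cong[OF ms, of size] by simp
  have dist: "distinct idx" unfolding idx_def by simp
  have sorted: "sorted (map (\<lambda>i. - lams i) idx)" unfolding idx_def by simp
  have idx: "idx ! i < n" if "i < n" for i
    using arg_cong[OF ms, of set_mset] len that by (metis atLeastLessThan_iff nth_mem set_mset_mset set_upt)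
  have "orthonormal_eigenbasis G n (\<lambda>i. ys (idx ! i)) (\<lambda>i. lams (idx ! i))"
    using es idx unfolding orthonormal_eigenbasis_def orthonormal_def
    by (auto simp: nth_eq_iff_index_eq[OF dist] len)
  moreover have "lams (idx ! j) \<le> lams (idx ! i)" if "i \<le> j" "j < n" for i j
    using sorted_nth_mono[OF sorted, of i j] that len by simp
  ultimately show ?thesis by blast
qed

section \<open>Singular values through an eigenbasis of the Gram matrix\<close>

lemma gram_symmetric:
  fixes M :: "real mat"
  assumes "M \<in> carrier_mat m n"
  shows "transpose_mat (transpose_mat M * M) = transpose_mat M * M"
  using transpose_mult[of "transpose_mat M" n m M] assms by simp

lemma gram_eigenbasis_exists:
  fixes M :: "real mat"
  assumes "M \<in> carrier_mat m n"
  obtains ys lams where "orthonormal_eigenbasis (transpose_mat M * M) n ys lams"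
    and "\<forall>i j. i \<le> j \<longrightarrow> j < n \<longrightarrow> lams j \<le> lams i"
proof -
  have "transpose_mat M * M \<in> carrier_mat n n" using assms by simp
  with spectral_theorem_sorted[OF this gram_symmetric[OF assms]] that show ?thesis by blast
qed

lemma gram_eigenbasis_images:
  fixes M :: "real mat"
  assumes M: "M \<in> carrier_mat m n" and es: "orthonormal_eigenbasis (transpose_mat M * M) n ys lams"
    and j: "j < n" and k: "k < n"
  shows "(M *\<^sub>v ys j) \<bullet> (M *\<^sub>v ys k) = (if j = k then lams j else 0)"
proof -
  note ys = orthonormal_eigenbasisD(2)[OF es]
  have "(M *\<^sub>v ys j) \<bullet> (M *\<^sub>v ys k) = ys j \<bullet> (lams k \<cdot>\<^sub>v ys k)"
    using scalar_prod_gram[OF M ys[OF j] ys[OF k]] orthonormal_eigenbasisD(3)[OF es k] by simp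
  thus ?thesis
    using ys[OF j] ys[OF k] orthonormalD(3)[OF orthonormal_eigenbasisD(1)[OF es], of j k] j k
    by simp
qed

lemma gram_eigenvalue_nonneg:
  fixes M :: "real mat"
  assumes "M \<in> carrier_mat m n" and "orthonormal_eigenbasis (transpose_mat M * M) n ys lams"
    and "j < n"
  shows "lams j \<ge> 0"
  using gram_eigenbasis_images[OF assms assms(3)] conjugate_square_ge_0_vec[of "M *\<^sub>v ys j"]
  by simp

lemma gram_eigenvector_orthogonal_kernel:
  fixes M :: "real mat"
  assumes M: "M \<in> carrier_mat m n" and es: "orthonormal_eigenbasis (transpose_mat M * M) n ys lams"
    and k: "k < n" "lams k > 0" and v: "v \<in> carrier_vec n" "M *\<^sub>v v = 0\<^sub>v m"
  shows "v \<bullet> ys k = 0"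
proof -
  note yk = orthonormal_eigenbasisD(2)[OF es k(1)]
  have "lams k * (v \<bullet> ys k) = v \<bullet> ((transpose_mat M * M) *\<^sub>v ys k)"
    using orthonormal_eigenbasisD(3)[OF es k(1)] v yk by simp
  also have "\<dots> = (M *\<^sub>v v) \<bullet> (M *\<^sub>v ys k)" by (rule scalar_prod_gram[OF M v(1) yk])
  also have "\<dots> = 0" using v M yk by simp
  finally show ?thesis using k(2) by simp
qed

lemma proots_linear_factors: "proots (\<Prod>a \<leftarrow> xs. [:- a, 1:]) = mset (xs :: real list)"
proof (induction xs)
  case (Cons a xs)
  have "(\<Prod>a \<leftarrow> xs. [:- a, 1:]) \<noteq> 0" by (auto simp: prod_list_zero_iff)
  hence "proots (\<Prod>a \<leftarrow> a # xs. [:- a, 1:]) = proots [:- a, 1:] + proots (\<Prod>a \<leftarrow> xs. [:- a, 1:])"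
    by (simp only: list.map prod_list.Cons, intro proots_mult) auto
  thus ?case using Cons proots_linear_factor[of "- a"] by simp
qed simp

lemma char_poly_eigenbasis:
  assumes G: "G \<in> carrier_mat n n" and es: "orthonormal_eigenbasis G n ys lams"
  shows "proots (char_poly G) = mset (map lams [0..<n])"
proof -
  note ys = orthonormal_eigenbasisD(2)[OF es]
  define Y where "Y = mat n n (\<lambda>(l,j). ys j $ l)"
  define L where "L = mat n n (\<lambda>(i,j). if i = j then lams i else 0)"
  have Y: "Y \<in> carrier_mat n n" and L: "L \<in> carrier_mat n n" unfolding Y_def L_def by auto
  have colY: "col Y j = ys j" if "j < n" for j
    unfolding Y_def using ys[OF that] that by (intro eq_vecI) auto
  have YtY: "transpose_mat Y * Y = 1\<^sub>m n"
    using Y colY orthonormalD(3)[OF orthonormal_eigenbasisD(1)[OF es]] by (intro eq_matI) auto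
  have YYt: "Y * transpose_mat Y = 1\<^sub>m n"
    using mat_mult_left_right_inverse[OF _ Y YtY] Y by simp
  have GY: "G * Y = Y * L"
  proof (rule eq_matI)
    fix i j assume "i < dim_row (Y * L)" "j < dim_col (Y * L)"
    hence i: "i < n" and j: "j < n" using Y L by auto
    have "(G * Y) $$ (i,j) = (G *\<^sub>v ys j) $ i" using i j G Y colY by simp
    also have "\<dots> = lams j * ys j $ i"
      using i orthonormal_eigenbasisD(3)[OF es j] ys[OF j] by simp
    also have "\<dots> = (Y * L) $$ (i,j)"
      using i j unfolding Y_def L_def
      by (simp add: scalar_prod_def atLeast0LessThan if_distrib[of "\<lambda>x. _ * x"] cong: if_cong)
    finally show "(G * Y) $$ (i,j) = (Y * L) $$ (i,j)" .
  qed (use G Y L in auto)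
  have "G = Y * L * transpose_mat Y"
    using G Y L YYt by (simp flip: GY add: assoc_mult_mat[of _ n n _ n _ n])
  hence "similar_mat G L"
    using similar_matI[of G L Y "transpose_mat Y" n] G Y L YYt YtY by auto
  hence "char_poly G = char_poly L" by (rule char_poly_similar)
  also have "\<dots> = (\<Prod>a \<leftarrow> diag_mat L. [:- a, 1:])"
    by (rule char_poly_upper_triangular[OF L]) (simp add: upper_triangular_def L_def)
  also have "diag_mat L = map lams [0..<n]" unfolding diag_mat_def L_def by simp
  finally have "char_poly G = (\<Prod>a \<leftarrow> map lams [0..<n]. [:- a, 1:])" .
  thus ?thesis by (simp only: proots_linear_factors)
qed

lemma singular_values_eigenbasis:
  fixes M :: "real mat"
  assumes M: "M \<in> carrier_mat m n" and es: "orthonormal_eigenbasis (transpose_mat M * M) n ys lams"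
  shows "singular_values M = mset (map (\<lambda>j. sqrt (lams j)) [0..<n])"
  using char_poly_eigenbasis[OF _ es] M unfolding singular_values_def
  by (simp add: multiset.map_comp o_def)

lemma schatten_norm_powr_eigenbasis:
  fixes M :: "real mat"
  assumes M: "M \<in> carrier_mat m n" and es: "orthonormal_eigenbasis (transpose_mat M * M) n ys lams"
    and p: "p > 0"
  shows "schatten_norm p M powr p = (\<Sum>j<n. sqrt (lams j) powr p)"
proof -
  have "\<Sum>\<^sub># (image_mset (\<lambda>s. s powr p) (singular_values M)) = (\<Sum>j<n. sqrt (lams j) powr p)"
    unfolding singular_values_eigenbasis[OF M es]
    by (simp add: sum_mset_sum_list sum_list_distinct_conv_sum_set atLeast0LessThan
        mset_map[symmetric] del: mset_map)
  moreover have "(\<Sum>j<n. sqrt (lams j) powr p) \<ge> 0" by (simp add: sum_nonneg)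
  ultimately show ?thesis unfolding schatten_norm_def using p by (simp add: powr_powr)
qed

lemma sigma_max_eigenbasis:
  fixes M :: "real mat"
  assumes M: "M \<in> carrier_mat m n" and es: "orthonormal_eigenbasis (transpose_mat M * M) n ys lams"
    and sorted: "\<forall>i j. i \<le> j \<longrightarrow> j < n \<longrightarrow> lams j \<le> lams i" and n: "n > 0"
  shows "sigma_max M = sqrt (lams 0)"
proof -
  have "set_mset (singular_values M) = (\<lambda>j. sqrt (lams j)) ` {..<n}"
    unfolding singular_values_eigenbasis[OF M es] by (auto simp: atLeast0LessThan)
  moreover have "Max ((\<lambda>j. sqrt (lams j)) ` {..<n}) = sqrt (lams 0)"
    by (rule Max_eqI) (use n sorted in auto)
  ultimately show ?thesis unfolding sigma_max_def by simp
qed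

lemma quadratic_form_eigenbasis:
  fixes G :: "real mat"
  assumes G: "G \<in> carrier_mat n n" and GT: "transpose_mat G = G"
    and es: "orthonormal_eigenbasis G n ys lams" and x: "x \<in> carrier_vec n"
  shows "x \<bullet> (G *\<^sub>v x) = (\<Sum>j<n. lams j * (ys j \<bullet> x)\<^sup>2)"
proof -
  note ys = orthonormal_eigenbasisD(2)[OF es]
  have "x \<bullet> (G *\<^sub>v x) = (\<Sum>j<n. (ys j \<bullet> x) * (ys j \<bullet> (G *\<^sub>v x)))"
    using G x by (intro parseval_identity[OF orthonormal_eigenbasisD(1)[OF es]]) auto
  also have "\<dots> = (\<Sum>j<n. lams j * (ys j \<bullet> x)\<^sup>2)"
  proof (intro sum.cong refl)
    fix j assume "j \<in> {..<n}"
    hence j: "j < n" by simp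
    have "ys j \<bullet> (G *\<^sub>v x) = (transpose_mat G *\<^sub>v ys j) \<bullet> x"
      using transpose_vec_mult_scalar[OF G x ys[OF j]] by simp
    also have "\<dots> = lams j * (ys j \<bullet> x)"
      unfolding GT orthonormal_eigenbasisD(3)[OF es j] using ys[OF j] x by simp
    finally show "(ys j \<bullet> x) * (ys j \<bullet> (G *\<^sub>v x)) = lams j * (ys j \<bullet> x)\<^sup>2"
      by (simp add: power2_eq_square)
  qed
  finally show ?thesis .
qed

section \<open>Convexity of \<open>t \<mapsto> t powr p\<close>\<close>

lemma powr_tangent_line:
  fixes s t p :: real
  assumes s: "s > 0" and t: "t > 0" and p: "p \<ge> 1"
  shows "s powr p + p * s powr (p - 1) * (t - s) \<le> t powr p"
proof -
  define c where "c = p * s powr (p - 1)"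
  define f where "f x = x powr p - c * x" for x :: real
  have der: "DERIV f x :> p * x powr (p - 1) - c" if "x > 0" for x
    unfolding f_def using has_real_derivative_powr[OF that, of p] that
    by (auto intro!: derivative_eq_intros)
  \<comment> \<open>\<open>f\<close> is minimal at \<open>s\<close>, because \<open>f'\<close> is increasing and vanishes there.\<close>
  have "f s \<le> f t"
  proof (cases "s \<le> t")
    case True
    show ?thesis
    proof (rule DERIV_nonneg_imp_nondecreasing[OF True])
      fix x assume x: "s \<le> x" "x \<le> t"
      have "s powr (p - 1) \<le> x powr (p - 1)" using x s p by (intro powr_mono2) auto
      thus "\<exists>y. DERIV f x :> y \<and> 0 \<le> y" using der[of x] x s p unfolding c_def by auto
    qed
  next
    case False
    show ?thesis
    proof (rule DERIV_nonpos_imp_nonincreasing[of t s])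
      fix x assume x: "t \<le> x" "x \<le> s"
      have "x powr (p - 1) \<le> s powr (p - 1)" using x t p by (intro powr_mono2) auto
      thus "\<exists>y. DERIV f x :> y \<and> y \<le> 0"
        using der[of x] x t p unfolding c_def by (auto simp: mult_left_mono)
    qed (use False in simp)
  qed
  thus ?thesis unfolding f_def c_def by (simp add: algebra_simps)
qed

lemma powr_substochastic_combination:
  fixes d s :: "'a \<Rightarrow> real"
  assumes d: "\<And>j. j \<in> J \<Longrightarrow> d j \<ge> 0" and s: "\<And>j. j \<in> J \<Longrightarrow> s j > 0"
    and D: "(\<Sum>j\<in>J. d j) \<le> 1" and p: "p \<ge> 1"
  shows "(\<Sum>j\<in>J. d j * s j) powr p \<le> (\<Sum>j\<in>J. d j * s j powr p)"
proof -
  define S where "S = (\<Sum>j\<in>J. d j * s j)"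
  define D where "D = (\<Sum>j\<in>J. d j)"
  have "S \<ge> 0" unfolding S_def using d s by (intro sum_nonneg) (simp add: less_imp_le)
  show ?thesis
  proof (cases "S = 0")
    case True
    thus ?thesis unfolding S_def[symmetric] using d by (simp add: sum_nonneg)
  next
    case False
    with \<open>S \<ge> 0\<close> have S: "S > 0" by simp
    have "1 * (1 - D) \<le> p * (1 - D)" using p D unfolding D_def by (intro mult_right_mono) auto
    hence "S powr p * 1 \<le> S powr p * (D + p * (1 - D))" by (intro mult_left_mono) auto
    also have "\<dots> = D * S powr p + p * (S powr (p - 1) * S) * (1 - D)"
      using S by (simp add: powr_mult_base mult.commute algebra_simps)
    also have "\<dots> = D * S powr p + p * S powr (p - 1) * ((\<Sum>j\<in>J. d j * s j) - D * S)"
      unfolding S_def[symmetric] by (simp add: algebra_simps)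
    also have "\<dots> = (\<Sum>j\<in>J. d j * (S powr p + p * S powr (p - 1) * (s j - S)))"
      unfolding D_def
      by (simp add: algebra_simps sum.distrib sum_subtractf sum_distrib_left sum_distrib_right)
    also have "\<dots> \<le> (\<Sum>j\<in>J. d j * s j powr p)"
      using powr_tangent_line[OF S s p] d by (intro sum_mono mult_left_mono) auto
    finally show ?thesis unfolding S_def by simp
  qed
qed

lemma sum_powr_doubly_substochastic:
  fixes d :: "'a \<Rightarrow> 'b \<Rightarrow> real" and s :: "'b \<Rightarrow> real"
  assumes "finite I" and d: "\<And>i j. i \<in> I \<Longrightarrow> j \<in> J \<Longrightarrow> d i j \<ge> 0"
    and rows: "\<And>i. i \<in> I \<Longrightarrow> (\<Sum>j\<in>J. d i j) \<le> 1"
    and cols: "\<And>j. j \<in> J \<Longrightarrow> (\<Sum>i\<in>I. d i j) \<le> 1"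
    and s: "\<And>j. j \<in> J \<Longrightarrow> s j > 0" and p: "p \<ge> 1"
  shows "(\<Sum>i\<in>I. (\<Sum>j\<in>J. d i j * s j) powr p) \<le> (\<Sum>j\<in>J. s j powr p)"
proof -
  have "(\<Sum>i\<in>I. (\<Sum>j\<in>J. d i j * s j) powr p) \<le> (\<Sum>i\<in>I. \<Sum>j\<in>J. d i j * s j powr p)"
    using d rows s p by (intro sum_mono powr_substochastic_combination) auto
  also have "\<dots> = (\<Sum>j\<in>J. s j powr p * (\<Sum>i\<in>I. d i j))"
    by (subst sum.swap) (simp add: sum_distrib_left mult.commute)
  also have "\<dots> \<le> (\<Sum>j\<in>J. s j powr p)"
    using cols by (intro sum_mono) (simp add: mult_left_le)
  finally show ?thesis .
qed

section \<open>A Ky Fan type inequality\<close>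

definition left_singular_vector :: "real mat \<Rightarrow> (nat \<Rightarrow> real vec) \<Rightarrow> (nat \<Rightarrow> real) \<Rightarrow> nat \<Rightarrow> real vec" where
  "left_singular_vector M ys lams j = (1 / sqrt (lams j)) \<cdot>\<^sub>v (M *\<^sub>v ys j)"

lemma orthonormal_subset: "orthonormal I d e \<Longrightarrow> J \<subseteq> I \<Longrightarrow> orthonormal J d e"
  unfolding orthonormal_def by blast

lemma left_singular_vectors_orthonormal:
  fixes M :: "real mat"
  assumes M: "M \<in> carrier_mat m n" and es: "orthonormal_eigenbasis (transpose_mat M * M) n ys lams"
  shows "orthonormal {j. j < n \<and> lams j > 0} m (left_singular_vector M ys lams)"
  unfolding orthonormal_def
proof (intro conjI ballI)
  fix j assume "j \<in> {j. j < n \<and> lams j > 0}"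
  thus "left_singular_vector M ys lams j \<in> carrier_vec m"
    unfolding left_singular_vector_def using M orthonormal_eigenbasisD(2)[OF es] by simp
next
  fix j k assume j: "j \<in> {j. j < n \<and> lams j > 0}" and k: "k \<in> {j. j < n \<and> lams j > 0}"
  have "left_singular_vector M ys lams j \<bullet> left_singular_vector M ys lams k
      = (1 / sqrt (lams j)) * (1 / sqrt (lams k)) * ((M *\<^sub>v ys j) \<bullet> (M *\<^sub>v ys k))"
    unfolding left_singular_vector_def using M j k orthonormal_eigenbasisD(2)[OF es] by simp
  thus "left_singular_vector M ys lams j \<bullet> left_singular_vector M ys lams k = (if j = k then 1 else 0)"
    using gram_eigenbasis_images[OF M es, of j k] j k by simp
qed

lemma bilinear_form_singular_expansion:
  fixes M :: "real mat"
  assumes M: "M \<in> carrier_mat m n" and es: "orthonormal_eigenbasis (transpose_mat M * M) n ys lams"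
    and u: "u \<in> carrier_vec m" and v: "v \<in> carrier_vec n"
  shows "u \<bullet> (M *\<^sub>v v) = (\<Sum>j | j < n \<and> lams j > 0.
           sqrt (lams j) * ((ys j \<bullet> v) * (left_singular_vector M ys lams j \<bullet> u)))"
proof -
  note ys = orthonormal_eigenbasisD(2)[OF es]
  have image: "(M *\<^sub>v ys j) \<bullet> u = sqrt (lams j) * (left_singular_vector M ys lams j \<bullet> u)"
    if "j < n" "lams j > 0" for j
    unfolding left_singular_vector_def using that M ys u by simp
  have kernel: "M *\<^sub>v ys j = 0\<^sub>v m" if "j < n" "\<not> lams j > 0" for j
    using that gram_eigenbasis_images[OF M es, of j j] gram_eigenvalue_nonneg[OF M es, of j]
      conjugate_square_eq_0_vec[of "M *\<^sub>v ys j" m] M ys by simp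
  have "u \<bullet> (M *\<^sub>v v) = (transpose_mat M *\<^sub>v u) \<bullet> v"
    using transpose_vec_mult_scalar[OF M v u] by simp
  also have "\<dots> = (\<Sum>j<n. (ys j \<bullet> (transpose_mat M *\<^sub>v u)) * (ys j \<bullet> v))"
    using M u v by (intro parseval_identity[OF orthonormal_eigenbasisD(1)[OF es]]) auto
  also have "\<dots> = (\<Sum>j<n. (ys j \<bullet> v) * ((M *\<^sub>v ys j) \<bullet> u))"
    using M u ys transpose_vec_mult_scalar[OF M ys u]
    by (intro sum.cong refl) (simp add: comm_scalar_prod[of "ys _" n] comm_scalar_prod[of u m])
  also have "\<dots> = (\<Sum>j | j < n \<and> lams j > 0. (ys j \<bullet> v) * ((M *\<^sub>v ys j) \<bullet> u))"
    using kernel u by (intro sum.mono_neutral_right) auto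
  also have "\<dots> = (\<Sum>j | j < n \<and> lams j > 0.
      sqrt (lams j) * ((ys j \<bullet> v) * (left_singular_vector M ys lams j \<bullet> u)))"
    using image by (intro sum.cong refl) simp
  finally show ?thesis .
qed

lemma sum_abs_coefficient_products_le_one:
  assumes "finite J" and a: "orthonormal J n as" and b: "orthonormal J m bs"
    and x: "x \<in> carrier_vec n" "x \<bullet> x = 1" and y: "y \<in> carrier_vec m" "y \<bullet> y = 1"
  shows "(\<Sum>j\<in>J. \<bar>as j \<bullet> x\<bar> * \<bar>bs j \<bullet> y\<bar>) \<le> 1"
proof -
  have "(\<Sum>j\<in>J. \<bar>as j \<bullet> x\<bar> * \<bar>bs j \<bullet> y\<bar>) \<le> (\<Sum>j\<in>J. ((as j \<bullet> x)\<^sup>2 + (bs j \<bullet> y)\<^sup>2) / 2)"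
  proof (rule sum_mono)
    fix j
    show "\<bar>as j \<bullet> x\<bar> * \<bar>bs j \<bullet> y\<bar> \<le> ((as j \<bullet> x)\<^sup>2 + (bs j \<bullet> y)\<^sup>2) / 2"
      using sum_squares_bound[of "\<bar>as j \<bullet> x\<bar>" "\<bar>bs j \<bullet> y\<bar>"] by simp
  qed
  also have "\<dots> = ((\<Sum>j\<in>J. (as j \<bullet> x)\<^sup>2) + (\<Sum>j\<in>J. (bs j \<bullet> y)\<^sup>2)) / 2"
    by (simp only: sum_divide_distrib[symmetric] sum.distrib)
  also have "\<dots> \<le> (x \<bullet> x + y \<bullet> y) / 2"
    using bessel_inequality[OF \<open>finite J\<close> a x(1)] bessel_inequality[OF \<open>finite J\<close> b y(1)] by simp
  finally show ?thesis using x(2) y(2) by simp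
qed

theorem sum_abs_bilinear_powr_le_schatten:
  fixes A :: "real mat" and us vs :: "nat \<Rightarrow> real vec"
  assumes A: "A \<in> carrier_mat m n" and "finite I"
    and us: "orthonormal I m us" and vs: "orthonormal I n vs" and p: "p \<ge> 1"
  shows "(\<Sum>i\<in>I. \<bar>us i \<bullet> (A *\<^sub>v vs i)\<bar> powr p) \<le> schatten_norm p A powr p"
proof -
  obtain ys lams where es: "orthonormal_eigenbasis (transpose_mat A * A) n ys lams"
    using gram_eigenbasis_exists[OF A] by (metis (no_types))
  define J where "J = {j. j < n \<and> lams j > 0}"
  define e where "e = left_singular_vector A ys lams"
  \<comment> \<open>Expanding \<open>A\<close> in its singular vectors bounds \<open>|us i \<bullet> A vs i|\<close> by
    \<open>\<Sum>j. d i j * \<sigma>\<^sub>j\<close> with a doubly substochastic matrix \<open>d\<close>.\<close>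
  define d where "d i j = \<bar>ys j \<bullet> vs i\<bar> * \<bar>e j \<bullet> us i\<bar>" for i j
  have "finite J" unfolding J_def by simp
  have ys: "orthonormal J n ys"
    by (rule orthonormal_subset[OF orthonormal_eigenbasisD(1)[OF es]]) (auto simp: J_def)
  have e: "orthonormal J m e"
    unfolding e_def J_def by (rule left_singular_vectors_orthonormal[OF A es])
  have rows: "(\<Sum>j\<in>J. d i j) \<le> 1" if "i \<in> I" for i
    unfolding d_def using orthonormalD[OF vs that] orthonormalD[OF us that]
    by (intro sum_abs_coefficient_products_le_one[OF \<open>finite J\<close> ys e]) auto
  have cols: "(\<Sum>i\<in>I. d i j) \<le> 1" if "j \<in> J" for j
  proof -
    have "d i j = \<bar>vs i \<bullet> ys j\<bar> * \<bar>us i \<bullet> e j\<bar>" if "i \<in> I" for i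
      unfolding d_def using orthonormalD(1)[OF vs that] orthonormalD(1)[OF us that]
        orthonormalD(1)[OF ys \<open>j \<in> J\<close>] orthonormalD(1)[OF e \<open>j \<in> J\<close>]
      by (simp add: comm_scalar_prod[of "ys j" n] comm_scalar_prod[of "e j" m])
    thus ?thesis
      using orthonormalD[OF ys that] orthonormalD[OF e that]
        sum_abs_coefficient_products_le_one[OF \<open>finite I\<close> vs us, of "ys j" "e j"]
      by (simp cong: sum.cong)
  qed
  have "\<bar>us i \<bullet> (A *\<^sub>v vs i)\<bar> \<le> (\<Sum>j\<in>J. d i j * sqrt (lams j))" if i: "i \<in> I" for i
    unfolding bilinear_form_singular_expansion[OF A es orthonormalD(1)[OF us i] orthonormalD(1)[OF vs i]]
    unfolding J_def[symmetric] e_def[symmetric] d_def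
    by (rule order_trans[OF sum_abs], rule sum_mono) (auto simp: abs_mult J_def)
  hence "(\<Sum>i\<in>I. \<bar>us i \<bullet> (A *\<^sub>v vs i)\<bar> powr p) \<le> (\<Sum>i\<in>I. (\<Sum>j\<in>J. d i j * sqrt (lams j)) powr p)"
    using p by (intro sum_mono powr_mono2) auto
  also have "\<dots> \<le> (\<Sum>j\<in>J. sqrt (lams j) powr p)"
    by (rule sum_powr_doubly_substochastic[OF \<open>finite I\<close> _ rows cols _ p]) (auto simp: d_def J_def)
  also have "\<dots> \<le> (\<Sum>j<n. sqrt (lams j) powr p)" by (rule sum_mono2) (auto simp: J_def)
  also have "\<dots> = schatten_norm p A powr p"
    using schatten_norm_powr_eigenbasis[OF A es] p by simp
  finally show ?thesis .
qed

section \<open>Rank-one projections and interlacing\<close>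

lemma outer_carrier: "u \<in> carrier_vec n \<Longrightarrow> outer u \<in> carrier_mat n n"
  unfolding outer_def by auto

lemma projection_carrier: "u \<in> carrier_vec n \<Longrightarrow> 1\<^sub>m n - outer u \<in> carrier_mat n n"
  using outer_carrier by (metis minus_carrier_mat one_carrier_mat)

lemma projection_mult_vec:
  fixes u x :: "real vec"
  assumes u: "u \<in> carrier_vec n" and x: "x \<in> carrier_vec n"
  shows "(1\<^sub>m n - outer u) *\<^sub>v x = x - (u \<bullet> x) \<cdot>\<^sub>v u"
proof -
  have "outer u *\<^sub>v x = (u \<bullet> x) \<cdot>\<^sub>v u"
    using u x unfolding outer_def
    by (intro eq_vecI) (simp_all add: scalar_prod_def sum_distrib_left mult_ac)
  thus ?thesis
    using minus_mult_distrib_mat_vec[OF one_carrier_mat outer_carrier[OF u] x] x by simp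
qed

lemma scalar_prod_linear_combination:
  fixes ys :: "nat \<Rightarrow> real vec" and c :: "nat \<Rightarrow> real"
  assumes ys: "\<And>k. k < r \<Longrightarrow> ys k \<in> carrier_vec n" and q: "q \<in> carrier_vec n"
  shows "q \<bullet> vec n (\<lambda>l. \<Sum>k<r. c k * ys k $ l) = (\<Sum>k<r. c k * (q \<bullet> ys k))"
proof -
  have "q \<bullet> vec n (\<lambda>l. \<Sum>k<r. c k * ys k $ l) = (\<Sum>l<n. \<Sum>k<r. q $ l * (c k * ys k $ l))"
    by (simp add: scalar_prod_def atLeast0LessThan sum_distrib_left)
  also have "\<dots> = (\<Sum>k<r. \<Sum>l<n. q $ l * (c k * ys k $ l))" by (rule sum.swap)
  also have "\<dots> = (\<Sum>k<r. c k * (q \<bullet> ys k))"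
  proof (intro sum.cong refl)
    fix k assume "k \<in> {..<r}"
    hence "dim_vec (ys k) = n" using ys by auto
    thus "(\<Sum>l<n. q $ l * (c k * ys k $ l)) = c k * (q \<bullet> ys k)"
      by (simp add: scalar_prod_def atLeast0LessThan sum_distrib_left mult.left_commute)
  qed
  finally show ?thesis .
qed

lemma exists_nonzero_orthogonal:
  fixes g :: "nat \<Rightarrow> 'a :: idom vec"
  assumes k: "k < r" and g: "\<And>i. i < k \<Longrightarrow> g i \<in> carrier_vec r"
  shows "\<exists>c \<in> carrier_vec r. c \<noteq> 0\<^sub>v r \<and> (\<forall>i<k. g i \<bullet> c = 0)"
proof -
  define E where "E = mat\<^sub>r r r (\<lambda>i. if i = r - 1 then 0\<^sub>v r else if i < k then g i else 0\<^sub>v r)"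
  have E: "E \<in> carrier_mat r r" unfolding E_def by simp
  have "det E = 0" unfolding E_def by (rule det_row_0) (use k g in auto)
  then obtain c where c: "c \<in> carrier_vec r" "c \<noteq> 0\<^sub>v r" and Ec: "E *\<^sub>v c = 0\<^sub>v r"
    using det_0_iff_vec_prod_zero[OF E] by blast
  have "g i \<bullet> c = 0" if i: "i < k" for i
  proof -
    have "i \<noteq> r - 1" "i < r" using i k by auto
    hence "(E *\<^sub>v c) $ i = g i \<bullet> c" unfolding E_def using i g[OF i] by (simp add: row_mat_of_row_fun)
    thus ?thesis using Ec \<open>i < r\<close> by simp
  qed
  with c show ?thesis by blast
qed

lemma rayleigh_lower_bound:
  fixes G :: "real mat"
  assumes G: "G \<in> carrier_mat n n" "transpose_mat G = G" and es: "orthonormal_eigenbasis G n ys lams"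
    and sorted: "\<forall>i j. i \<le> j \<longrightarrow> j < n \<longrightarrow> lams j \<le> lams i"
    and r: "r \<le> n" and x: "x \<in> carrier_vec n"
    and span: "\<And>i. r \<le> i \<Longrightarrow> i < n \<Longrightarrow> ys i \<bullet> x = 0"
  shows "lams (r - 1) * (x \<bullet> x) \<le> x \<bullet> (G *\<^sub>v x)"
proof -
  have "lams (r - 1) * (x \<bullet> x) = (\<Sum>i<n. lams (r - 1) * (ys i \<bullet> x)\<^sup>2)"
    using parseval_identity[OF orthonormal_eigenbasisD(1)[OF es] x x]
    by (simp add: sum_distrib_left power2_eq_square)
  also have "\<dots> \<le> (\<Sum>i<n. lams i * (ys i \<bullet> x)\<^sup>2)"
  proof (rule sum_mono)
    fix i assume i: "i \<in> {..<n}"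
    show "lams (r - 1) * (ys i \<bullet> x)\<^sup>2 \<le> lams i * (ys i \<bullet> x)\<^sup>2"
    proof (cases "i < r")
      case True
      with sorted r have "lams (r - 1) \<le> lams i" by auto
      thus ?thesis by (rule mult_right_mono) simp
    qed (use i span in simp)
  qed
  also have "\<dots> = x \<bullet> (G *\<^sub>v x)" by (rule quadratic_form_eigenbasis[OF G es x, symmetric])
  finally show ?thesis .
qed

lemma rayleigh_upper_bound:
  fixes G :: "real mat"
  assumes G: "G \<in> carrier_mat n n" "transpose_mat G = G" and es: "orthonormal_eigenbasis G n ys lams"
    and sorted: "\<forall>i j. i \<le> j \<longrightarrow> j < n \<longrightarrow> lams j \<le> lams i"
    and x: "x \<in> carrier_vec n" and orth: "\<And>i. i < j \<Longrightarrow> ys i \<bullet> x = 0"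
  shows "x \<bullet> (G *\<^sub>v x) \<le> lams j * (x \<bullet> x)"
proof -
  have "x \<bullet> (G *\<^sub>v x) = (\<Sum>i<n. lams i * (ys i \<bullet> x)\<^sup>2)"
    by (rule quadratic_form_eigenbasis[OF G es x])
  also have "\<dots> \<le> (\<Sum>i<n. lams j * (ys i \<bullet> x)\<^sup>2)"
  proof (rule sum_mono)
    fix i assume i: "i \<in> {..<n}"
    show "lams i * (ys i \<bullet> x)\<^sup>2 \<le> lams j * (ys i \<bullet> x)\<^sup>2"
    proof (cases "i < j")
      case False
      with sorted i have "lams i \<le> lams j" by auto
      thus ?thesis by (rule mult_right_mono) simp
    qed (use orth in simp)
  qed
  also have "\<dots> = lams j * (x \<bullet> x)"
    using parseval_identity[OF orthonormal_eigenbasisD(1)[OF es] x x]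
    by (simp add: sum_distrib_left power2_eq_square)
  finally show ?thesis .
qed

lemma exists_span_vector_orthogonal:
  fixes ys q :: "nat \<Rightarrow> real vec"
  assumes on: "orthonormal {..<n} n ys" and k: "k < r" and r: "r \<le> n"
    and q: "\<And>i. i < k \<Longrightarrow> q i \<in> carrier_vec n"
  obtains x where "x \<in> carrier_vec n" "x \<bullet> x > 0" "\<And>i. i < k \<Longrightarrow> q i \<bullet> x = 0"
    "\<And>i. r \<le> i \<Longrightarrow> i < n \<Longrightarrow> ys i \<bullet> x = 0"
proof -
  note ys = orthonormalD(1)[OF on]
  obtain c where c: "c \<in> carrier_vec r" "c \<noteq> 0\<^sub>v r"
    and qc: "\<And>i. i < k \<Longrightarrow> vec r (\<lambda>l. q i \<bullet> ys l) \<bullet> c = 0"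
    using exists_nonzero_orthogonal[of k r "\<lambda>i. vec r (\<lambda>l. q i \<bullet> ys l)"] k by auto
  define x where "x = vec n (\<lambda>l. \<Sum>i<r. c $ i * ys i $ l)"
  have x: "x \<in> carrier_vec n" unfolding x_def by simp
  have x_coord: "v \<bullet> x = (\<Sum>i<r. c $ i * (v \<bullet> ys i))" if "v \<in> carrier_vec n" for v
    unfolding x_def using ys r by (intro scalar_prod_linear_combination[OF _ that]) auto
  have qx: "q i \<bullet> x = 0" if "i < k" for i
    using qc[OF that] c x_coord[OF q[OF that]] by (simp add: scalar_prod_def atLeast0LessThan mult.commute)
  have yx: "ys i \<bullet> x = (if i < r then c $ i else 0)" if i: "i < n" for i
  proof -
    have "ys i \<in> carrier_vec n" using ys i by simp
    hence "ys i \<bullet> x = (\<Sum>l<r. c $ l * (if i = l then 1 else 0))"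
      unfolding x_coord[OF \<open>ys i \<in> carrier_vec n\<close>] using orthonormalD(3)[OF on] i r
      by (intro sum.cong refl) auto
    thus ?thesis by (simp add: if_distrib[of "\<lambda>t. _ * t"] cong: if_cong)
  qed
  have "x \<bullet> x = (\<Sum>i<n. (ys i \<bullet> x) * (ys i \<bullet> x))" by (rule parseval_identity[OF on x x])
  also have "\<dots> = (\<Sum>i<r. c $ i * c $ i)"
    using yx r by (intro sum.mono_neutral_cong_right) auto
  also have "\<dots> = c \<bullet> c" using c by (simp add: scalar_prod_def atLeast0LessThan)
  finally have "x \<bullet> x > 0" using scalar_prod_self_pos[OF c] by simp
  with x qx yx show ?thesis using that by simp
qed

lemma projection_interlacing:
  fixes A :: "real mat" and u :: "real vec" and m n :: nat
  defines "B \<equiv> A * (1\<^sub>m n - outer u)"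
  assumes A: "A \<in> carrier_mat m n" and u: "u \<in> carrier_vec n"
    and esA: "orthonormal_eigenbasis (transpose_mat A * A) n ys lams"
    and sortA: "\<forall>i j. i \<le> j \<longrightarrow> j < n \<longrightarrow> lams j \<le> lams i"
    and esB: "orthonormal_eigenbasis (transpose_mat B * B) n zs mus"
    and sortB: "\<forall>i j. i \<le> j \<longrightarrow> j < n \<longrightarrow> mus j \<le> mus i"
    and j: "Suc j < n"
  shows "lams (Suc j) \<le> mus j"
proof -
  have B: "B \<in> carrier_mat m n" unfolding B_def using A projection_carrier[OF u] by simp
  \<comment> \<open>Courant-Fischer: test both Rayleigh quotients on a vector in the span of
    \<open>ys 0, \<dots>, ys (Suc j)\<close> that is orthogonal to \<open>u, zs 0, \<dots>, zs (j - 1)\<close>.\<close>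
  define q where "q i = (if i = 0 then u else zs (i - 1))" for i
  have q: "q i \<in> carrier_vec n" if "i < Suc j" for i
    using that j u orthonormal_eigenbasisD(2)[OF esB] unfolding q_def by auto
  obtain x where x: "x \<in> carrier_vec n" "x \<bullet> x > 0" and qx: "\<And>i. i < Suc j \<Longrightarrow> q i \<bullet> x = 0"
    and span: "\<And>i. Suc (Suc j) \<le> i \<Longrightarrow> i < n \<Longrightarrow> ys i \<bullet> x = 0"
    by (rule exists_span_vector_orthogonal[where r = "Suc (Suc j)", OF orthonormal_eigenbasisD(1)[OF esA] _ _ q])
      (use j in auto)
  have "(1\<^sub>m n - outer u) *\<^sub>v x = x"
    unfolding projection_mult_vec[OF u x(1)] using qx[of 0] u x by (intro eq_vecI) (auto simp: q_def)
  hence "B *\<^sub>v x = A *\<^sub>v x"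
    unfolding B_def using A x projection_carrier[OF u] by (simp add: assoc_mult_mat_vec[of _ m n _ n])
  hence same: "x \<bullet> ((transpose_mat A * A) *\<^sub>v x) = x \<bullet> ((transpose_mat B * B) *\<^sub>v x)"
    using scalar_prod_gram[OF A x(1) x(1)] scalar_prod_gram[OF B x(1) x(1)] by simp
  have "lams (Suc j) * (x \<bullet> x) \<le> x \<bullet> ((transpose_mat A * A) *\<^sub>v x)"
    using rayleigh_lower_bound[where r = "Suc (Suc j)", OF _ gram_symmetric[OF A] esA sortA _ x(1) span] A j
    by simp
  also have "\<dots> \<le> mus j * (x \<bullet> x)"
    unfolding same using qx[of "Suc _"] B
    by (intro rayleigh_upper_bound[OF _ gram_symmetric[OF B] esB sortB x(1)]) (auto simp: q_def)
  finally show ?thesis using x(2) by simp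
qed

theorem schatten_powr_projection_lower_bound:
  fixes A :: "real mat" and u :: "real vec"
  assumes A: "A \<in> carrier_mat m n" and u: "u \<in> carrier_vec n" and n: "n > 0" and p: "p > 0"
  shows "schatten_norm p A powr p - sigma_max A powr p
           \<le> schatten_norm p (A * (1\<^sub>m n - outer u)) powr p"
proof -
  define B where "B = A * (1\<^sub>m n - outer u)"
  have B: "B \<in> carrier_mat m n" unfolding B_def using A projection_carrier[OF u] by simp
  obtain ys lams where esA: "orthonormal_eigenbasis (transpose_mat A * A) n ys lams"
    and sortA: "\<forall>i j. i \<le> j \<longrightarrow> j < n \<longrightarrow> lams j \<le> lams i"
    by (rule gram_eigenbasis_exists[OF A])
  obtain zs mus where esB: "orthonormal_eigenbasis (transpose_mat B * B) n zs mus"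
    and sortB: "\<forall>i j. i \<le> j \<longrightarrow> j < n \<longrightarrow> mus j \<le> mus i"
    by (rule gram_eigenbasis_exists[OF B])
  obtain n' where n': "n = Suc n'" using n by (cases n) auto
  have "schatten_norm p A powr p - sigma_max A powr p = (\<Sum>j<n'. sqrt (lams (Suc j)) powr p)"
    using schatten_norm_powr_eigenbasis[OF A esA p] sigma_max_eigenbasis[OF A esA sortA n]
    unfolding n' by (simp add: sum.lessThan_Suc_shift del: sum.lessThan_Suc)
  also have "\<dots> \<le> (\<Sum>j<n'. sqrt (mus j) powr p)"
  proof (rule sum_mono)
    fix j assume "j \<in> {..<n'}"
    hence j: "Suc j < n" unfolding n' by simp
    have "lams (Suc j) \<le> mus j"
      using projection_interlacing[OF A u esA sortA esB[unfolded B_def] sortB j] .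
    thus "sqrt (lams (Suc j)) powr p \<le> sqrt (mus j) powr p"
      using gram_eigenvalue_nonneg[OF A esA j] p by (intro powr_mono2) auto
  qed
  also have "\<dots> \<le> (\<Sum>j<n. sqrt (mus j) powr p)" unfolding n' by simp
  also have "\<dots> = schatten_norm p B powr p"
    by (rule schatten_norm_powr_eigenbasis[OF B esB p, symmetric])
  finally show ?thesis unfolding B_def .
qed

lemma orthonormal_insert:
  assumes e: "orthonormal K d e" and v: "v \<in> carrier_vec d" "v \<bullet> v = 1"
    and orth: "\<And>k. k \<in> K \<Longrightarrow> v \<bullet> e k = 0" and i: "i \<notin> K"
  shows "orthonormal (insert i K) d (e(i := v))"
  using assms comm_scalar_prod[OF v(1) orthonormalD(1)[OF e]]
  unfolding orthonormal_def by auto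

theorem schatten_powr_pinching:
  fixes A B :: "real mat"
  assumes A: "A \<in> carrier_mat m n" and B: "B \<in> carrier_mat m n"
    and w: "w \<in> carrier_vec m" "w \<bullet> w = 1" and v: "v \<in> carrier_vec n" "v \<bullet> v = 1"
    and Bv: "B *\<^sub>v v = 0\<^sub>v m" and wB: "\<And>t. t \<in> carrier_vec n \<Longrightarrow> w \<bullet> (B *\<^sub>v t) = 0"
    and AB: "\<And>t. t \<in> carrier_vec n \<Longrightarrow> v \<bullet> t = 0 \<Longrightarrow> A *\<^sub>v t = B *\<^sub>v t"
    and p: "p \<ge> 1"
  shows "\<bar>w \<bullet> (A *\<^sub>v v)\<bar> powr p + schatten_norm p B powr p \<le> schatten_norm p A powr p"
proof -
  obtain ts mus where es: "orthonormal_eigenbasis (transpose_mat B * B) n ts mus"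
    using gram_eigenbasis_exists[OF B] by (metis (no_types))
  note tsc = orthonormal_eigenbasisD(2)[OF es]
  define K where "K = {k. k < n \<and> mus k > 0}"
  define f where "f = left_singular_vector B ts mus"
  have "finite K" and "n \<notin> K" unfolding K_def by auto
  have f: "orthonormal K m f" unfolding f_def K_def by (rule left_singular_vectors_orthonormal[OF B es])
  have ts: "orthonormal K n ts"
    by (rule orthonormal_subset[OF orthonormal_eigenbasisD(1)[OF es]]) (auto simp: K_def)
  have vt: "v \<bullet> ts k = 0" if "k \<in> K" for k
    using gram_eigenvector_orthogonal_kernel[OF B es _ _ v(1) Bv] that unfolding K_def by simp
  have wf: "w \<bullet> f k = 0" if "k \<in> K" for k
    using wB[OF tsc] that w B unfolding f_def left_singular_vector_def K_def by simp
  have diagonal: "\<bar>f k \<bullet> (A *\<^sub>v ts k)\<bar> = sqrt (mus k)" if k: "k \<in> K" for k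
  proof -
    have "f k \<bullet> (A *\<^sub>v ts k) = (1 / sqrt (mus k)) * ((B *\<^sub>v ts k) \<bullet> (B *\<^sub>v ts k))"
      using AB[OF _ vt[OF k]] k tsc B unfolding f_def left_singular_vector_def K_def by simp
    thus ?thesis using gram_eigenbasis_images[OF B es, of k k] k unfolding K_def
      by (simp add: real_div_sqrt)
  qed
  have "(\<Sum>i\<in>insert n K. \<bar>(f(n := w)) i \<bullet> (A *\<^sub>v (ts(n := v)) i)\<bar> powr p) \<le> schatten_norm p A powr p"
    using \<open>finite K\<close> by (intro sum_abs_bilinear_powr_le_schatten[OF A _
        orthonormal_insert[OF f w wf \<open>n \<notin> K\<close>] orthonormal_insert[OF ts v vt \<open>n \<notin> K\<close>] p]) simp
  moreover have "schatten_norm p B powr p = (\<Sum>k<n. sqrt (mus k) powr p)"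
    using schatten_norm_powr_eigenbasis[OF B es] p by simp
  moreover have "\<dots> = (\<Sum>k\<in>K. sqrt (mus k) powr p)"
    using gram_eigenvalue_nonneg[OF B es] by (intro sum.mono_neutral_right) (auto simp: K_def less_le)
  moreover have "(\<Sum>k\<in>K. \<bar>(f(n := w)) k \<bullet> (A *\<^sub>v (ts(n := v)) k)\<bar> powr p)
      = (\<Sum>k\<in>K. sqrt (mus k) powr p)"
    using \<open>n \<notin> K\<close> diagonal by (intro sum.cong refl) auto
  ultimately show ?thesis using \<open>finite K\<close> \<open>n \<notin> K\<close> by simp
qed

theorem schatten_powr_deflation_upper_bound:
  fixes A :: "real mat" and w :: "real vec"
  defines "x \<equiv> transpose_mat A *\<^sub>v w"
  assumes A: "A \<in> carrier_mat m n" and w: "w \<in> carrier_vec m" "vnorm2 w = 1"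
    and nz: "x \<noteq> 0\<^sub>v n" and p: "p \<ge> 1"
  shows "schatten_norm p (A * (1\<^sub>m n - outer ((1 / vnorm2 x) \<cdot>\<^sub>v x))) powr p
           \<le> schatten_norm p A powr p - vnorm2 x powr p"
proof -
  define a where "a = vnorm2 x"
  define v where "v = (1 / a) \<cdot>\<^sub>v x"
  define B where "B = A * (1\<^sub>m n - outer v)"
  have x: "x \<in> carrier_vec n" unfolding x_def using A w by simp
  have "x \<bullet> x > 0" by (rule scalar_prod_self_pos[OF x nz])
  hence a: "a > 0" "a * a = x \<bullet> x" unfolding a_def vnorm2_def by simp_all
  have v: "v \<in> carrier_vec n" "v \<bullet> v = 1"
    unfolding v_def using x a \<open>x \<bullet> x > 0\<close> by (simp_all add: field_simps)
  have xv: "x = a \<cdot>\<^sub>v v" unfolding v_def using a by (simp add: smult_smult_assoc)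
  have P: "1\<^sub>m n - outer v \<in> carrier_mat n n" by (rule projection_carrier[OF v(1)])
  have B: "B \<in> carrier_mat m n" unfolding B_def using A P by simp
  have Bt: "B *\<^sub>v t = A *\<^sub>v t - (v \<bullet> t) \<cdot>\<^sub>v (A *\<^sub>v v)" if t: "t \<in> carrier_vec n" for t
    unfolding B_def assoc_mult_mat_vec[OF A P t] projection_mult_vec[OF v(1) t]
    using A t v by (simp add: mult_minus_distrib_mat_vec mult_mat_vec)
  have wA: "w \<bullet> (A *\<^sub>v t) = a * (v \<bullet> t)" if t: "t \<in> carrier_vec n" for t
    using transpose_vec_mult_scalar[OF A t w(1)] t v unfolding x_def[symmetric] xv by simp
  have "\<bar>w \<bullet> (A *\<^sub>v v)\<bar> powr p + schatten_norm p B powr p \<le> schatten_norm p A powr p"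
  proof (rule schatten_powr_pinching[OF A B w(1) _ v _ _ _ p])
    show "w \<bullet> w = 1" using w(2) unfolding vnorm2_def by simp
    show "B *\<^sub>v v = 0\<^sub>v m" unfolding Bt[OF v(1)] using A v by simp
    show "w \<bullet> (B *\<^sub>v t) = 0" if "t \<in> carrier_vec n" for t
      unfolding Bt[OF that] using A v w that wA[OF that] wA[OF v(1)]
      by (simp add: scalar_prod_minus_distrib)
    show "A *\<^sub>v t = B *\<^sub>v t" if "t \<in> carrier_vec n" "v \<bullet> t = 0" for t
      unfolding Bt[OF that(1)] using A v that by (intro eq_vecI) auto
  qed
  thus ?thesis using wA[OF v(1)] a v unfolding B_def v_def a_def by simp
qed

theorem lemma7p6:
  fixes A :: "real mat" and w :: "real vec" and p \<epsilon> :: real and m n :: nat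
  assumes A: "A \<in> carrier_mat m n"
    and w: "w \<in> carrier_vec m" and wunit: "vnorm2 w = 1"
    and p: "p \<ge> 1" and eps: "\<epsilon> > 0"
    and nz: "transpose_mat A *\<^sub>v w \<noteq> 0\<^sub>v n"
    and hyp: "vnorm2 (transpose_mat A *\<^sub>v w) powr p
              \<ge> (1 + \<epsilon>) * sigma_max A powr p - \<epsilon> * schatten_norm p A powr p"
  shows "let v = (1 / vnorm2 (transpose_mat A *\<^sub>v w)) \<cdot>\<^sub>v (transpose_mat A *\<^sub>v w) in
         \<forall>u \<in> carrier_vec n. vnorm2 u = 1 \<longrightarrow>
           schatten_norm p (A * (1\<^sub>m n - outer v)) powr p
             \<le> (1 + \<epsilon>) * schatten_norm p (A * (1\<^sub>m n - outer u)) powr p"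
proof -
  let ?x = "transpose_mat A *\<^sub>v w"
  have "n > 0"
  proof (rule ccontr)
    assume "\<not> n > 0"
    with A have "?x = 0\<^sub>v n" by (intro eq_vecI) auto
    with nz show False ..
  qed
  have upper: "schatten_norm p (A * (1\<^sub>m n - outer ((1 / vnorm2 ?x) \<cdot>\<^sub>v ?x))) powr p
      \<le> schatten_norm p A powr p - vnorm2 ?x powr p"
    by (rule schatten_powr_deflation_upper_bound[OF A w wunit nz p])
  show ?thesis unfolding Let_def
  proof (intro ballI impI)
    \<comment> \<open>The lower bound holds for every \<open>u\<close>.\<close>
    fix u :: "real vec" assume u: "u \<in> carrier_vec n"
    have "schatten_norm p A powr p - vnorm2 ?x powr p
        \<le> (1 + \<epsilon>) * (schatten_norm p A powr p - sigma_max A powr p)"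
      using hyp by (simp add: algebra_simps)
    also have "\<dots> \<le> (1 + \<epsilon>) * schatten_norm p (A * (1\<^sub>m n - outer u)) powr p"
      using schatten_powr_projection_lower_bound[OF A u \<open>n > 0\<close>] p eps
      by (intro mult_left_mono) auto
    finally show "schatten_norm p (A * (1\<^sub>m n - outer ((1 / vnorm2 ?x) \<cdot>\<^sub>v ?x))) powr p
      \<le> (1 + \<epsilon>) * schatten_norm p (A * (1\<^sub>m n - outer u)) powr p"
      using upper by linarith
  qed
qed

end
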